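(* Let $n\ge 2$ and let $M\in\mathcal{M}_{d\times d}(\mathbb{C})$ be a nonderogatory matrix with $M\neq 0$ and $M^2=0$. Let $\mathcal{A}$ be the set of all $\mathbf{T}=(T_{p-q})_{p,q=0}^{n-1}\in\mathcal{T}_{n,d}(\mathcal{P}(M))$ such that $T_j$ is noninvertible for every $j\neq 0$. Then $\mathcal{A}$ is a commutative algebra which is maximal among commutative algebras contained in $\mathcal{T}_{n,d}(\mathcal{P}(M))$, and there are no $A,B\in\mathcal{P}(M)$ such that $\mathcal{A}=\mathcal{F}_{A,B}^{\mathcal{P}(M)}$.
   Context: A matrix $M$ is nonderogatory if its minimal polynomial equals its characteristic polynomial. $\mathcal{P}(M)=\{p(M): p\text{ a complex polynomial}\}$ is the algebra generated by $M$. For positive integers $n,d$, $\mathcal{T}_{n,d}$ denotes the set of block Toeplitz matrices $\mathbf{T}=(T_{p-q})_{p,q=0}^{n-1}$: $nd\times nd$ complex matrices partitioned into $n\times n$ blocks of size $d\times d$, whose $(p,q)$ block is $T_{p-q}$ for some $T_{-(n-1)},\dots,T_{n-1}\in\mathcal{M}_{d\times d}(\mathbb{C})$. For a subalgebra $\mathcal{B}\subseteq\mathcal{M}_{d\times d}(\mathbb{C})$, $\mathcal{T}_{n,d}(\mathcal{B})$ is the set of $\mathbf{T}\in\mathcal{T}_{n,d}$ with all $T_j\in\mathcal{B}$. An algebra contained in a set of matrices is a subset that is a linear subspace closed under matrix multiplication. For $A,B\in\mathcal{M}_{d\times d}(\mathbb{C})$, $$\mathcal{F}_{A,B}^{\mathcal{B}}=\{(T_{p-q})_{p,q=0}^{n-1}\in\mathcal{T}_{n,d}(\mathcal{B})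 : AT_j=BT_{j-n}\text{ for } j=1,2,\dots,n-1\}.$$ *)

theory Defs
  imports "Jordan_Normal_Form.Char_Poly"
begin

fun mat_poly_eval_list :: "'a::comm_ring_1 mat \<Rightarrow> 'a list \<Rightarrow> 'a mat" where
  "mat_poly_eval_list M [] = 0\<^sub>m (dim_row M) (dim_row M)"
| "mat_poly_eval_list M (c # cs) = c \<cdot>\<^sub>m 1\<^sub>m (dim_row M) + M * mat_poly_eval_list M cs"

definition mat_poly_eval :: "'a::comm_ring_1 poly \<Rightarrow> 'a mat \<Rightarrow> 'a mat" where
  "mat_poly_eval p M = mat_poly_eval_list M (coeffs p)"

definition is_minimal_poly :: "'a::field mat \<Rightarrow> 'a poly \<Rightarrow> bool" where
  "is_minimal_poly M p \<longleftrightarrow> monic p \<and> mat_poly_eval p M = 0\<^sub>m (dim_row M) (dim_row M) \<and>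
     (\<forall>q. q \<noteq> 0 \<and> mat_poly_eval q M = 0\<^sub>m (dim_row M) (dim_row M) \<longrightarrow> degree p \<le> degree q)"

definition nonderogatory :: "'a::field mat \<Rightarrow> bool" where
  "nonderogatory M \<longleftrightarrow> is_minimal_poly M (char_poly M)"

definition poly_algebra :: "'a::comm_ring_1 mat \<Rightarrow> 'a mat set" where
  "poly_algebra M = {mat_poly_eval p M | p. True}"

(* block Toeplitz matrix (T_{p-q})_{p,q=0}^{n-1} with d x d blocks, as an nd x nd matrix;
   row index i lies in block i div d, at position i mod d inside the block *)
definition block_toeplitz :: "nat \<Rightarrow> nat \<Rightarrow> (int \<Rightarrow> 'a mat) \<Rightarrow> 'a mat" where
  "block_toeplitz n d T = mat (n * d) (n * d)
     (\<lambda>(i, j). T (int (i div d) - int (j div d)) $$ (i mod d, j mod d))"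

definition toeplitz_set :: "nat \<Rightarrow> nat \<Rightarrow> 'a mat set \<Rightarrow> 'a mat set" where
  "toeplitz_set n d B = {block_toeplitz n d T | T.
     \<forall>j::int. \<bar>j\<bar> < int n \<longrightarrow> T j \<in> carrier_mat d d \<and> T j \<in> B}"

definition F_set :: "nat \<Rightarrow> nat \<Rightarrow> 'a::semiring_0 mat set \<Rightarrow> 'a mat \<Rightarrow> 'a mat \<Rightarrow> 'a mat set" where
  "F_set n d B A B' = {block_toeplitz n d T | T.
     (\<forall>j::int. \<bar>j\<bar> < int n \<longrightarrow> T j \<in> carrier_mat d d \<and> T j \<in> B) \<and>
     (\<forall>j::int. 1 \<le> j \<and> j \<le> int n - 1 \<longrightarrow> A * T j = B' * T (j - int n))}"

definition algebra_in :: "nat \<Rightarrow> 'a::comm_ring_1 mat set \<Rightarrow> 'a mat set \<Rightarrow> bool" where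
  "algebra_in N S C \<longleftrightarrow> C \<subseteq> S \<and> 0\<^sub>m N N \<in> C \<and>
     (\<forall>X\<in>C. \<forall>Y\<in>C. X + Y \<in> C \<and> X * Y \<in> C) \<and>
     (\<forall>c. \<forall>X\<in>C. c \<cdot>\<^sub>m X \<in> C)"

definition comm_algebra_in :: "nat \<Rightarrow> 'a::comm_ring_1 mat set \<Rightarrow> 'a mat set \<Rightarrow> bool" where
  "comm_algebra_in N S C \<longleftrightarrow> algebra_in N S C \<and> (\<forall>X\<in>C. \<forall>Y\<in>C. X * Y = Y * X)"

end

theory Submission imports Defs begin

text \<open>Since \<open>M\<^sup>2 = 0\<close>, the algebra \<open>\<P>(M)\<close> consists of the matrices \<open>a I + b M\<close>, and such a
  matrix is invertible exactly when \<open>a \<noteq> 0\<close>. So the blocks of an element of \<open>\<T>\<^sub>n\<^sub>,\<^sub>d(\<P>(M))\<close>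
  are \<open>\<alpha>\<^sub>j I + \<beta>\<^sub>j M\<close>, and \<open>\<A>\<close> consists of those with \<open>\<alpha>\<^sub>j = 0\<close> for \<open>j \<noteq> 0\<close>.
  The off-diagonal blocks of elements of \<open>\<A>\<close> are multiples of \<open>M\<close> and annihilate each other,
  so only products through the diagonal block survive; this makes \<open>\<A>\<close> a commutative algebra.
  A matrix of \<open>\<T>\<^sub>n\<^sub>,\<^sub>d(\<P>(M))\<close> commuting with the element of \<open>\<A>\<close> whose only nonzero block
  is \<open>M\<close> on the diagonal \<open>-j\<close> satisfies \<open>M T\<^sub>j = \<alpha>\<^sub>j M = 0\<close>, hence \<open>\<alpha>\<^sub>j = 0\<close>: this is
  maximality. If \<open>\<A> = F\<^sub>A\<^sub>,\<^sub>B\<close>, the same single-diagonal elements force \<open>A M = B M = 0\<close>,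
  i.e. \<open>A = b M\<close> and \<open>B = b' M\<close>; then scalar blocks \<open>c I\<close>, \<open>e I\<close> on the diagonals \<open>1\<close> and
  \<open>1 - n\<close> with \<open>b c = b' e\<close> give an element of \<open>F\<^sub>A\<^sub>,\<^sub>B\<close> with invertible off-diagonal
  blocks.\<close>

section \<open>Block Toeplitz matrices\<close>

lemma mat_eq_blockwiseI:
  assumes "A \<in> carrier_mat (n * d) (n * d)" and "B \<in> carrier_mat (n * d) (n * d)"
    and "\<And>p q a b. p < n \<Longrightarrow> q < n \<Longrightarrow> a < d \<Longrightarrow> b < d \<Longrightarrow>
           A $$ (p * d + a, q * d + b) = B $$ (p * d + a, q * d + b)"
  shows "A = B"
proof (rule eq_matI)
  fix i k assume "i < dim_row B" "k < dim_col B"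
  then have ik: "i < n * d" "k < n * d" using assms(2) by auto
  then have "0 < d" by (cases "d = 0") auto
  with ik have "i div d < n" "k div d < n" "i mod d < d" "k mod d < d"
    by (simp_all add: less_mult_imp_div_less)
  then show "A $$ (i, k) = B $$ (i, k)"
    using assms(3)[of "i div d" "k div d" "i mod d" "k mod d"] by (simp add: div_mult_mod_eq)
qed (use assms in auto)

lemma block_index_less: "p < n \<Longrightarrow> a < d \<Longrightarrow> p * d + a < n * (d::nat)"
proof -
  assume "p < n" "a < d"
  then have "p * d + a < Suc p * d" by simp
  also have "\<dots> \<le> n * d" using \<open>p < n\<close> by (intro mult_le_mono1) simp
  finally show ?thesis .
qed

lemma block_toeplitz_carrier [simp]:
  "block_toeplitz n d T \<in> carrier_mat (n * d) (n * d)"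
  "dim_row (block_toeplitz n d T) = n * d" "dim_col (block_toeplitz n d T) = n * d"
  unfolding block_toeplitz_def by auto

lemma block_toeplitz_block_index:
  assumes "p < n" "q < n" "a < d" "b < d"
  shows "block_toeplitz n d T $$ (p * d + a, q * d + b) = T (int p - int q) $$ (a, b)"
  using assms block_index_less[of p n a d] block_index_less[of q n b d]
  unfolding block_toeplitz_def by simp

lemma block_toeplitz_cong:
  "(\<And>j. \<bar>j\<bar> < int n \<Longrightarrow> T j = S j) \<Longrightarrow> block_toeplitz n d T = block_toeplitz n d S"
  by (intro mat_eq_blockwiseI) (auto simp: block_toeplitz_block_index)

lemma block_toeplitz_eq_iff:
  assumes "0 < d" and "\<And>j. \<bar>j\<bar> < int n \<Longrightarrow> T j \<in> carrier_mat d d \<and> S j \<in> carrier_mat d d"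
  shows "block_toeplitz n d T = block_toeplitz n d S \<longleftrightarrow> (\<forall>j. \<bar>j\<bar> < int n \<longrightarrow> T j = S j)"
proof
  assume eq: "block_toeplitz n d T = block_toeplitz n d S"
  show "\<forall>j. \<bar>j\<bar> < int n \<longrightarrow> T j = S j"
  proof (intro allI impI eq_matI)
    fix j :: int and a b assume j: "\<bar>j\<bar> < int n" and "a < dim_row (S j)" "b < dim_col (S j)"
    then have ab: "a < d" "b < d" using assms(2) by auto
    define p q where "p = nat (max j 0)" and "q = nat (max (- j) 0)"
    have pq: "p < n" "q < n" "int p - int q = j" using j unfolding p_def q_def by auto
    show "T j $$ (a, b) = S j $$ (a, b)"
      using arg_cong[OF eq, of "\<lambda>X. X $$ (p * d + a, q * d + b)"]
      by (simp add: block_toeplitz_block_index pq ab)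
  qed (use assms in auto)
next
  assume "\<forall>j. \<bar>j\<bar> < int n \<longrightarrow> T j = S j"
  then show "block_toeplitz n d T = block_toeplitz n d S"
    by (intro block_toeplitz_cong) auto
qed

lemma block_toeplitz_zero: "block_toeplitz n d (\<lambda>j. 0\<^sub>m d d) = 0\<^sub>m (n * d) (n * d)"
  by (intro mat_eq_blockwiseI) (auto simp: block_toeplitz_block_index block_index_less)

lemma block_toeplitz_add:
  assumes "\<And>j. \<bar>j\<bar> < int n \<Longrightarrow> T j \<in> carrier_mat d d \<and> S j \<in> carrier_mat d d"
  shows "block_toeplitz n d T + block_toeplitz n d S = block_toeplitz n d (\<lambda>j. T j + S j)"
proof (intro mat_eq_blockwiseI)
  fix p q a b assume "p < n" "q < n" "a < d" "b < d"
  moreover from this have "\<bar>int p - int q\<bar> < int n" by auto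
  then have "dim_row (S (int p - int q)) = d" "dim_col (S (int p - int q)) = d"
    using assms by auto
  ultimately show "(block_toeplitz n d T + block_toeplitz n d S) $$ (p * d + a, q * d + b)
      = block_toeplitz n d (\<lambda>j. T j + S j) $$ (p * d + a, q * d + b)"
    by (simp add: block_toeplitz_block_index block_index_less)
qed auto

lemma block_toeplitz_smult:
  assumes "\<And>j. \<bar>j\<bar> < int n \<Longrightarrow> T j \<in> carrier_mat d d"
  shows "c \<cdot>\<^sub>m block_toeplitz n d T = block_toeplitz n d (\<lambda>j. c \<cdot>\<^sub>m T j)"
proof (intro mat_eq_blockwiseI)
  fix p q a b assume "p < n" "q < n" "a < d" "b < d"
  moreover from this have "\<bar>int p - int q\<bar> < int n" by auto
  then have "dim_row (T (int p - int q)) = d" "dim_col (T (int p - int q)) = d"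
    using assms by auto
  ultimately show "(c \<cdot>\<^sub>m block_toeplitz n d T) $$ (p * d + a, q * d + b)
      = block_toeplitz n d (\<lambda>j. c \<cdot>\<^sub>m T j) $$ (p * d + a, q * d + b)"
    by (simp add: block_toeplitz_block_index block_index_less)
qed auto

lemma sum_lessThan_mult_blocks:
  fixes f :: "nat \<Rightarrow> 'a::comm_monoid_add"
  shows "(\<Sum>l < n * d. f l) = (\<Sum>r < n. \<Sum>c < d. f (r * d + c))"
proof -
  have "(\<Sum>l < n * d. f l) = (\<Sum>r < n. \<Sum>l \<in> {r * d..<r * d + d}. f l)"
    by (rule sum.nat_group[symmetric])
  also have "\<dots> = (\<Sum>r < n. \<Sum>c < d. f (r * d + c))"
    by (simp add: sum.atLeastLessThan_shift_0 atLeast0LessThan comp_def)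
  finally show ?thesis .
qed

lemma block_toeplitz_mult_block_index:
  fixes T S :: "int \<Rightarrow> 'a::semiring_0 mat"
  assumes car: "\<And>j. \<bar>j\<bar> < int n \<Longrightarrow> T j \<in> carrier_mat d d \<and> S j \<in> carrier_mat d d"
    and "p < n" "q < n" "a < d" "b < d"
  shows "(block_toeplitz n d T * block_toeplitz n d S) $$ (p * d + a, q * d + b)
    = (\<Sum>r < n. (T (int p - int r) * S (int r - int q)) $$ (a, b))"
proof -
  have "(block_toeplitz n d T * block_toeplitz n d S) $$ (p * d + a, q * d + b)
     = (\<Sum>r < n. \<Sum>c < d. block_toeplitz n d T $$ (p * d + a, r * d + c)
                         * block_toeplitz n d S $$ (r * d + c, q * d + b))"
    using assms(2-) by (simp add: block_index_less scalar_prod_def atLeast0LessThan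
        sum_lessThan_mult_blocks[where d = d])
  also have "\<dots> = (\<Sum>r < n. (T (int p - int r) * S (int r - int q)) $$ (a, b))"
  proof (rule sum.cong[OF refl])
    fix r assume "r \<in> {..<n}"
    then have "\<bar>int p - int r\<bar> < int n" "\<bar>int r - int q\<bar> < int n" using assms(2,3) by auto
    from car[OF this(1)] car[OF this(2)] show "(\<Sum>c < d. block_toeplitz n d T $$ (p * d + a, r * d + c)
                         * block_toeplitz n d S $$ (r * d + c, q * d + b))
        = (T (int p - int r) * S (int r - int q)) $$ (a, b)"
      using assms(2-) \<open>r \<in> {..<n}\<close>
      by (auto simp: block_toeplitz_block_index scalar_prod_def atLeast0LessThan)
  qed
  finally show ?thesis .
qed

lemma block_toeplitz_mult_offdiag_annihilating:
  fixes T S :: "int \<Rightarrow> 'a::semiring_0 mat"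
  assumes car: "\<And>j. \<bar>j\<bar> < int n \<Longrightarrow> T j \<in> carrier_mat d d \<and> S j \<in> carrier_mat d d"
    and annih: "\<And>j k. \<bar>j\<bar> < int n \<Longrightarrow> \<bar>k\<bar> < int n \<Longrightarrow> j \<noteq> 0 \<Longrightarrow> k \<noteq> 0 \<Longrightarrow>
                   T j * S k = 0\<^sub>m d d"
  shows "block_toeplitz n d T * block_toeplitz n d S
     = block_toeplitz n d (\<lambda>j. if j = 0 then T 0 * S 0 else T 0 * S j + T j * S 0)"
proof (intro mat_eq_blockwiseI)
  fix p q a b assume pq: "p < n" "q < n" and ab: "a < d" "b < d"
  define f where "f r = (T (int p - int r) * S (int r - int q)) $$ (a, b)" for r
  have entry: "(block_toeplitz n d T * block_toeplitz n d S) $$ (p * d + a, q * d + b) = (\<Sum>r < n. f r)"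
    unfolding f_def by (rule block_toeplitz_mult_block_index[OF car pq ab])
  have "f r = 0" if "r \<in> {..<n} - {p, q}" for r
  proof -
    have "T (int p - int r) * S (int r - int q) = 0\<^sub>m d d" using that pq by (intro annih) auto
    with ab show ?thesis by (simp add: f_def)
  qed
  then have "(\<Sum>r < n. f r) = (\<Sum>r \<in> {p, q}. f r)"
    using pq by (intro sum.mono_neutral_right) auto
  also have "\<dots> = (if int p - int q = 0 then T 0 * S 0
                  else T 0 * S (int p - int q) + T (int p - int q) * S 0) $$ (a, b)"
  proof (cases "p = q")
    case False
    have "\<bar>int p - int q\<bar> < int n" "\<bar>0::int\<bar> < int n" using pq by auto
    with car have c: "T (int p - int q) * S 0 \<in> carrier_mat d d"
      by (meson mult_carrier_mat)
    show ?thesis using False ab carrier_matD[OF c] by (simp add: f_def)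
  qed (simp add: f_def)
  finally show "(block_toeplitz n d T * block_toeplitz n d S) $$ (p * d + a, q * d + b)
      = block_toeplitz n d (\<lambda>j. if j = 0 then T 0 * S 0 else T 0 * S j + T j * S 0)
          $$ (p * d + a, q * d + b)"
    unfolding entry using pq ab by (simp add: block_toeplitz_block_index)
qed auto

lemma sum_lessThan_int_delta:
  "(\<Sum>r < n. if int r = z then g else 0) = (if 0 \<le> z \<and> z < int n then g else (0::'a::comm_monoid_add))"
proof -
  have "(\<Sum>r < n. if int r = z then g else 0) = (\<Sum>r < n. if r = nat z \<and> 0 \<le> z then g else 0)"
    by (rule sum.cong) auto
  also have "\<dots> = (if 0 \<le> z \<and> z < int n then g else 0)"
    by (cases "0 \<le> z") auto
  finally show ?thesis .
qed

lemma block_toeplitz_mult_single_diag_right: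
  fixes T :: "int \<Rightarrow> 'a::semiring_0 mat"
  assumes car: "\<And>j. \<bar>j\<bar> < int n \<Longrightarrow> T j \<in> carrier_mat d d" and N: "N \<in> carrier_mat d d"
    and pq: "p < n" "q < n" and ab: "a < d" "b < d"
  shows "(block_toeplitz n d T * block_toeplitz n d (\<lambda>j. if j = k then N else 0\<^sub>m d d))
           $$ (p * d + a, q * d + b)
    = (if 0 \<le> int q + k \<and> int q + k < int n then (T (int p - int q - k) * N) $$ (a, b) else 0)"
proof -
  have "(block_toeplitz n d T * block_toeplitz n d (\<lambda>j. if j = k then N else 0\<^sub>m d d))
           $$ (p * d + a, q * d + b)
      = (\<Sum>r < n. (T (int p - int r) * (if int r - int q = k then N else 0\<^sub>m d d)) $$ (a, b))"
    using car N pq ab by (intro block_toeplitz_mult_block_index) auto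
  also have "\<dots> = (\<Sum>r < n. if int r = int q + k then (T (int p - int q - k) * N) $$ (a, b) else 0)"
  proof (rule sum.cong[OF refl])
    fix r assume "r \<in> {..<n}"
    then have "T (int p - int r) \<in> carrier_mat d d" using pq by (intro car) auto
    then show "(T (int p - int r) * (if int r - int q = k then N else 0\<^sub>m d d)) $$ (a, b)
        = (if int r = int q + k then (T (int p - int q - k) * N) $$ (a, b) else 0)"
    proof (cases "int r = int q + k")
      case True
      then have "int r - int q = k" "int p - int r = int p - int q - k" by simp_all
      then show ?thesis by (simp only: if_P[OF True] if_P[OF \<open>int r - int q = k\<close>] refl if_True)
    next
      case False
      then have "int r - int q \<noteq> k" by auto
      with False show ?thesis using ab \<open>T (int p - int r) \<in> carrier_mat d d\<close> by simp
    qed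
  qed
  finally show ?thesis by (simp only: sum_lessThan_int_delta)
qed

lemma block_toeplitz_mult_single_diag_left:
  fixes T :: "int \<Rightarrow> 'a::semiring_0 mat"
  assumes car: "\<And>j. \<bar>j\<bar> < int n \<Longrightarrow> T j \<in> carrier_mat d d" and N: "N \<in> carrier_mat d d"
    and pq: "p < n" "q < n" and ab: "a < d" "b < d"
  shows "(block_toeplitz n d (\<lambda>j. if j = k then N else 0\<^sub>m d d) * block_toeplitz n d T)
           $$ (p * d + a, q * d + b)
    = (if 0 \<le> int p - k \<and> int p - k < int n then (N * T (int p - int q - k)) $$ (a, b) else 0)"
proof -
  have "(block_toeplitz n d (\<lambda>j. if j = k then N else 0\<^sub>m d d) * block_toeplitz n d T)
           $$ (p * d + a, q * d + b)
      = (\<Sum>r < n. ((if int p - int r = k then N else 0\<^sub>m d d) * T (int r - int q)) $$ (a, b))"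
    using car N pq ab by (intro block_toeplitz_mult_block_index) auto
  also have "\<dots> = (\<Sum>r < n. if int r = int p - k then (N * T (int p - int q - k)) $$ (a, b) else 0)"
  proof (rule sum.cong[OF refl])
    fix r assume "r \<in> {..<n}"
    then have "T (int r - int q) \<in> carrier_mat d d" using pq by (intro car) auto
    then show "((if int p - int r = k then N else 0\<^sub>m d d) * T (int r - int q)) $$ (a, b)
        = (if int r = int p - k then (N * T (int p - int q - k)) $$ (a, b) else 0)"
    proof (cases "int r = int p - k")
      case True
      then have "int p - int r = k" "int r - int q = int p - int q - k" by simp_all
      then show ?thesis by (simp only: if_P[OF True] if_P[OF \<open>int p - int r = k\<close>] refl if_True)
    next
      case False
      then have "int p - int r \<noteq> k" by auto
      with False show ?thesis using ab \<open>T (int r - int q) \<in> carrier_mat d d\<close> by simp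
    qed
  qed
  finally show ?thesis by (simp only: sum_lessThan_int_delta)
qed

text \<open>Compare the diagonal block in the first block row (for \<open>j > 0\<close>) or in the last one
  (for \<open>j < 0\<close>): there the product with the single diagonal on the right vanishes, while the
  product on the left picks up \<open>N T\<^sub>j\<close>.\<close>

lemma block_toeplitz_commute_single_diag:
  fixes T :: "int \<Rightarrow> 'a::semiring_0 mat"
  assumes car: "\<And>j. \<bar>j\<bar> < int n \<Longrightarrow> T j \<in> carrier_mat d d" and N: "N \<in> carrier_mat d d"
    and j: "j \<noteq> 0" "\<bar>j\<bar> < int n"
    and comm: "block_toeplitz n d T * block_toeplitz n d (\<lambda>i. if i = - j then N else 0\<^sub>m d d)
             = block_toeplitz n d (\<lambda>i. if i = - j then N else 0\<^sub>m d d) * block_toeplitz n d T"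
  shows "N * T j = 0\<^sub>m d d"
proof (rule eq_matI)
  define p where "p = (if 0 < j then 0 else n - 1)"
  have p: "p < n" "\<not> (0 \<le> int p + - j \<and> int p + - j < int n)" "0 \<le> int p - - j \<and> int p - - j < int n"
    using j unfolding p_def by auto
  fix a b assume "a < dim_row (0\<^sub>m d d :: 'a mat)" "b < dim_col (0\<^sub>m d d :: 'a mat)"
  then have ab: "a < d" "b < d" by auto
  have "int p - int p - - j = j" by simp
  then have "(N * T j) $$ (a, b)
      = (block_toeplitz n d (\<lambda>i. if i = - j then N else 0\<^sub>m d d) * block_toeplitz n d T)
          $$ (p * d + a, p * d + b)"
    by (simp only: block_toeplitz_mult_single_diag_left[OF car N p(1) p(1) ab] if_P[OF p(3)])
  also have "\<dots> = (block_toeplitz n d T * block_toeplitz n d (\<lambda>i. if i = - j then N else 0\<^sub>m d d))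
          $$ (p * d + a, p * d + b)"
    by (simp only: comm)
  also have "\<dots> = 0"
    by (simp only: block_toeplitz_mult_single_diag_right[OF car N p(1) p(1) ab] if_not_P[OF p(2)])
  finally show "(N * T j) $$ (a, b) = 0\<^sub>m d d $$ (a, b)"
    using ab by simp
qed (use N car j in auto)

definition toeplitz_set_singular_offdiag :: "nat \<Rightarrow> nat \<Rightarrow> 'a::semiring_1 mat set \<Rightarrow> 'a mat set" where
  "toeplitz_set_singular_offdiag n d \<B> = {block_toeplitz n d T | T.
     (\<forall>j::int. \<bar>j\<bar> < int n \<longrightarrow> T j \<in> carrier_mat d d \<and> T j \<in> \<B>) \<and>
     (\<forall>j::int. \<bar>j\<bar> < int n \<and> j \<noteq> 0 \<longrightarrow> \<not> invertible_mat (T j))}"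

lemma block_toeplitz_mem_singular_offdiag_iff:
  assumes "0 < d" and car: "\<And>j. \<bar>j\<bar> < int n \<Longrightarrow> T j \<in> carrier_mat d d"
  shows "block_toeplitz n d T \<in> toeplitz_set_singular_offdiag n d \<B> \<longleftrightarrow>
    (\<forall>j. \<bar>j\<bar> < int n \<longrightarrow> T j \<in> \<B>) \<and> (\<forall>j. \<bar>j\<bar> < int n \<and> j \<noteq> 0 \<longrightarrow> \<not> invertible_mat (T j))"
proof
  assume "block_toeplitz n d T \<in> toeplitz_set_singular_offdiag n d \<B>"
  then obtain S where eq: "block_toeplitz n d T = block_toeplitz n d S"
    and S: "\<forall>j. \<bar>j\<bar> < int n \<longrightarrow> S j \<in> carrier_mat d d \<and> S j \<in> \<B>"
      "\<forall>j. \<bar>j\<bar> < int n \<and> j \<noteq> 0 \<longrightarrow> \<not> invertible_mat (S j)"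
    unfolding toeplitz_set_singular_offdiag_def by blast
  have "\<forall>j. \<bar>j\<bar> < int n \<longrightarrow> T j = S j"
    using eq block_toeplitz_eq_iff[OF \<open>0 < d\<close>, of n T S] car S(1) by blast
  with S show "(\<forall>j. \<bar>j\<bar> < int n \<longrightarrow> T j \<in> \<B>) \<and> (\<forall>j. \<bar>j\<bar> < int n \<and> j \<noteq> 0 \<longrightarrow> \<not> invertible_mat (T j))"
    by auto
next
  assume "(\<forall>j. \<bar>j\<bar> < int n \<longrightarrow> T j \<in> \<B>) \<and> (\<forall>j. \<bar>j\<bar> < int n \<and> j \<noteq> 0 \<longrightarrow> \<not> invertible_mat (T j))"
  with car show "block_toeplitz n d T \<in> toeplitz_set_singular_offdiag n d \<B>"
    unfolding toeplitz_set_singular_offdiag_def by blast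
qed

lemma block_toeplitz_mem_F_set_iff:
  assumes "0 < d" and car: "\<And>j. \<bar>j\<bar> < int n \<Longrightarrow> T j \<in> carrier_mat d d"
  shows "block_toeplitz n d T \<in> F_set n d \<B> A B \<longleftrightarrow>
    (\<forall>j. \<bar>j\<bar> < int n \<longrightarrow> T j \<in> \<B>) \<and> (\<forall>j. 1 \<le> j \<and> j \<le> int n - 1 \<longrightarrow> A * T j = B * T (j - int n))"
proof
  assume "block_toeplitz n d T \<in> F_set n d \<B> A B"
  then obtain S where eq: "block_toeplitz n d T = block_toeplitz n d S"
    and S: "\<forall>j. \<bar>j\<bar> < int n \<longrightarrow> S j \<in> carrier_mat d d \<and> S j \<in> \<B>"
      "\<forall>j. 1 \<le> j \<and> j \<le> int n - 1 \<longrightarrow> A * S j = B * S (j - int n)"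
    unfolding F_set_def by blast
  have TS: "\<forall>j. \<bar>j\<bar> < int n \<longrightarrow> T j = S j"
    using eq block_toeplitz_eq_iff[OF \<open>0 < d\<close>, of n T S] car S(1) by blast
  have "A * T j = B * T (j - int n)" if "1 \<le> j" "j \<le> int n - 1" for j
    using that S(2) TS[rule_format, of j] TS[rule_format, of "j - int n"] by auto
  with S TS show "(\<forall>j. \<bar>j\<bar> < int n \<longrightarrow> T j \<in> \<B>) \<and>
      (\<forall>j. 1 \<le> j \<and> j \<le> int n - 1 \<longrightarrow> A * T j = B * T (j - int n))"
    by auto
next
  assume "(\<forall>j. \<bar>j\<bar> < int n \<longrightarrow> T j \<in> \<B>) \<and>
    (\<forall>j. 1 \<le> j \<and> j \<le> int n - 1 \<longrightarrow> A * T j = B * T (j - int n))"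
  with car show "block_toeplitz n d T \<in> F_set n d \<B> A B"
    unfolding F_set_def by blast
qed

section \<open>Matrices with square zero\<close>

locale square_zero_mat =
  fixes M :: "'a::comm_ring_1 mat" and d :: nat
  assumes M_carrier: "M \<in> carrier_mat d d" and M_square_zero: "M * M = 0\<^sub>m d d"
begin

lemma square_zero_carrier [simp]: "a \<cdot>\<^sub>m 1\<^sub>m d + b \<cdot>\<^sub>m M \<in> carrier_mat d d"
  using M_carrier by simp

lemma square_zero_add:
  "(a \<cdot>\<^sub>m 1\<^sub>m d + b \<cdot>\<^sub>m M) + (c \<cdot>\<^sub>m 1\<^sub>m d + e \<cdot>\<^sub>m M) = (a + c) \<cdot>\<^sub>m 1\<^sub>m d + (b + e) \<cdot>\<^sub>m M"
  using M_carrier by (auto intro!: eq_matI simp: algebra_simps)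

lemma square_zero_smult:
  "c \<cdot>\<^sub>m (a \<cdot>\<^sub>m 1\<^sub>m d + b \<cdot>\<^sub>m M) = (c * a) \<cdot>\<^sub>m 1\<^sub>m d + (c * b) \<cdot>\<^sub>m M"
  using M_carrier by (auto intro!: eq_matI simp: algebra_simps)

lemma square_zero_zero: "0 \<cdot>\<^sub>m 1\<^sub>m d + 0 \<cdot>\<^sub>m M = 0\<^sub>m d d"
  using M_carrier by (auto intro!: eq_matI)

lemma square_zero_single: "0 \<cdot>\<^sub>m 1\<^sub>m d + (if P then 1 else 0) \<cdot>\<^sub>m M = (if P then M else 0\<^sub>m d d)"
  using M_carrier by (auto intro!: eq_matI)

lemma square_zero_mult:
  "(a \<cdot>\<^sub>m 1\<^sub>m d + b \<cdot>\<^sub>m M) * (c \<cdot>\<^sub>m 1\<^sub>m d + e \<cdot>\<^sub>m M)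
     = (a * c) \<cdot>\<^sub>m 1\<^sub>m d + (a * e + b * c) \<cdot>\<^sub>m M"
proof -
  have car: "a \<cdot>\<^sub>m 1\<^sub>m d \<in> carrier_mat d d" "b \<cdot>\<^sub>m M \<in> carrier_mat d d"
     "c \<cdot>\<^sub>m 1\<^sub>m d \<in> carrier_mat d d" "e \<cdot>\<^sub>m M \<in> carrier_mat d d" using M_carrier by auto
  have "(a \<cdot>\<^sub>m 1\<^sub>m d + b \<cdot>\<^sub>m M) * (c \<cdot>\<^sub>m 1\<^sub>m d + e \<cdot>\<^sub>m M)
     = (a \<cdot>\<^sub>m 1\<^sub>m d) * (c \<cdot>\<^sub>m 1\<^sub>m d + e \<cdot>\<^sub>m M) + (b \<cdot>\<^sub>m M) * (c \<cdot>\<^sub>m 1\<^sub>m d + e \<cdot>\<^sub>m M)"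
    using car by (simp add: add_mult_distrib_mat[of _ d d _ _ d])
  also have "\<dots> = ((a \<cdot>\<^sub>m 1\<^sub>m d) * (c \<cdot>\<^sub>m 1\<^sub>m d) + (a \<cdot>\<^sub>m 1\<^sub>m d) * (e \<cdot>\<^sub>m M))
       + ((b \<cdot>\<^sub>m M) * (c \<cdot>\<^sub>m 1\<^sub>m d) + (b \<cdot>\<^sub>m M) * (e \<cdot>\<^sub>m M))"
    using car by (simp add: mult_add_distrib_mat[of _ d d _ d])
  also have "(a \<cdot>\<^sub>m 1\<^sub>m d) * (c \<cdot>\<^sub>m 1\<^sub>m d) = (a * c) \<cdot>\<^sub>m 1\<^sub>m d"
    by (auto intro!: eq_matI)
  also have "(a \<cdot>\<^sub>m 1\<^sub>m d) * (e \<cdot>\<^sub>m M) = (a * e) \<cdot>\<^sub>m M"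
    using M_carrier by (auto intro!: eq_matI simp: mult_smult_distrib[of _ d d _ d]
        mult_smult_assoc_mat[of _ d d _ d])
  also have "(b \<cdot>\<^sub>m M) * (c \<cdot>\<^sub>m 1\<^sub>m d) = (b * c) \<cdot>\<^sub>m M"
    using M_carrier by (auto intro!: eq_matI simp: mult_smult_distrib[of _ d d _ d]
        mult_smult_assoc_mat[of _ d d _ d])
  also have "(b \<cdot>\<^sub>m M) * (e \<cdot>\<^sub>m M) = 0\<^sub>m d d"
    using M_carrier M_square_zero
    by (simp add: mult_smult_distrib[of _ d d _ d] mult_smult_assoc_mat[of _ d d _ d])
  finally show ?thesis
    using M_carrier by (auto intro!: eq_matI simp: algebra_simps)
qed

lemma mult_square_zero_left: "M * (a \<cdot>\<^sub>m 1\<^sub>m d + b \<cdot>\<^sub>m M) = a \<cdot>\<^sub>m M"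
  and mult_square_zero_right: "(a \<cdot>\<^sub>m 1\<^sub>m d + b \<cdot>\<^sub>m M) * M = a \<cdot>\<^sub>m M"
proof -
  have M: "0 \<cdot>\<^sub>m 1\<^sub>m d + 1 \<cdot>\<^sub>m M = M" and aM: "0 \<cdot>\<^sub>m 1\<^sub>m d + a \<cdot>\<^sub>m M = a \<cdot>\<^sub>m M"
    using M_carrier by (auto intro!: eq_matI)
  from square_zero_mult[of 0 1 a b] show "M * (a \<cdot>\<^sub>m 1\<^sub>m d + b \<cdot>\<^sub>m M) = a \<cdot>\<^sub>m M"
    by (simp only: M aM mult_zero_left mult_1 add_0)
  from square_zero_mult[of a b 0 1] show "(a \<cdot>\<^sub>m 1\<^sub>m d + b \<cdot>\<^sub>m M) * M = a \<cdot>\<^sub>m M"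
    by (simp only: M aM mult_zero_right mult_1_right add_0_right)
qed

lemma mat_poly_eval_list_square_zero:
  "mat_poly_eval_list M cs = nth_default 0 cs 0 \<cdot>\<^sub>m 1\<^sub>m d + nth_default 0 cs 1 \<cdot>\<^sub>m M"
proof (induction cs)
  case Nil
  then show ?case using M_carrier by (auto intro!: eq_matI)
next
  case (Cons c cs)
  then have "mat_poly_eval_list M (c # cs) = c \<cdot>\<^sub>m 1\<^sub>m d + nth_default 0 cs 0 \<cdot>\<^sub>m M"
    using M_carrier by (simp add: mult_square_zero_left)
  then show ?case by (simp add: nth_default_Cons)
qed

lemma mem_poly_algebra_iff: "X \<in> poly_algebra M \<longleftrightarrow> (\<exists>a b. X = a \<cdot>\<^sub>m 1\<^sub>m d + b \<cdot>\<^sub>m M)"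
proof
  assume "X \<in> poly_algebra M"
  then show "\<exists>a b. X = a \<cdot>\<^sub>m 1\<^sub>m d + b \<cdot>\<^sub>m M"
    unfolding poly_algebra_def mat_poly_eval_def mat_poly_eval_list_square_zero by blast
next
  assume "\<exists>a b. X = a \<cdot>\<^sub>m 1\<^sub>m d + b \<cdot>\<^sub>m M"
  then obtain a b where "X = a \<cdot>\<^sub>m 1\<^sub>m d + b \<cdot>\<^sub>m M" by blast
  then have "X = mat_poly_eval [:a, b:] M"
    unfolding mat_poly_eval_def mat_poly_eval_list_square_zero nth_default_coeffs_eq by simp
  then show "X \<in> poly_algebra M" unfolding poly_algebra_def by blast
qed

lemma block_toeplitz_poly_algebra_coeffs:
  assumes "\<forall>j. \<bar>j\<bar> < int n \<longrightarrow> T j \<in> poly_algebra M"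
  obtains \<alpha> \<beta> where "\<forall>j. \<bar>j\<bar> < int n \<longrightarrow> T j = \<alpha> j \<cdot>\<^sub>m 1\<^sub>m d + \<beta> j \<cdot>\<^sub>m M"
proof -
  have ab: "\<forall>j. \<exists>a b. \<bar>j\<bar> < int n \<longrightarrow> T j = a \<cdot>\<^sub>m 1\<^sub>m d + b \<cdot>\<^sub>m M"
    using assms mem_poly_algebra_iff by blast
  obtain \<alpha> where \<alpha>: "\<forall>j. \<exists>b. \<bar>j\<bar> < int n \<longrightarrow> T j = \<alpha> j \<cdot>\<^sub>m 1\<^sub>m d + b \<cdot>\<^sub>m M"
    using choice[OF ab] by blast
  obtain \<beta> where "\<forall>j. \<bar>j\<bar> < int n \<longrightarrow> T j = \<alpha> j \<cdot>\<^sub>m 1\<^sub>m d + \<beta> j \<cdot>\<^sub>m M"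
    using choice[OF \<alpha>] by blast
  then show ?thesis using that by blast
qed

lemma mem_toeplitz_set_iff:
  "X \<in> toeplitz_set n d (poly_algebra M)
     \<longleftrightarrow> (\<exists>\<alpha> \<beta>. X = block_toeplitz n d (\<lambda>j. \<alpha> j \<cdot>\<^sub>m 1\<^sub>m d + \<beta> j \<cdot>\<^sub>m M))"
proof
  assume "X \<in> toeplitz_set n d (poly_algebra M)"
  then obtain T where X: "X = block_toeplitz n d T"
    and T: "\<forall>j. \<bar>j\<bar> < int n \<longrightarrow> T j \<in> poly_algebra M"
    unfolding toeplitz_set_def by blast
  obtain \<alpha> \<beta> where "\<forall>j. \<bar>j\<bar> < int n \<longrightarrow> T j = \<alpha> j \<cdot>\<^sub>m 1\<^sub>m d + \<beta> j \<cdot>\<^sub>m M"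
    using block_toeplitz_poly_algebra_coeffs[OF T] .
  then have "X = block_toeplitz n d (\<lambda>j. \<alpha> j \<cdot>\<^sub>m 1\<^sub>m d + \<beta> j \<cdot>\<^sub>m M)"
    unfolding X by (intro block_toeplitz_cong) auto
  then show "\<exists>\<alpha> \<beta>. X = block_toeplitz n d (\<lambda>j. \<alpha> j \<cdot>\<^sub>m 1\<^sub>m d + \<beta> j \<cdot>\<^sub>m M)" by blast
next
  assume "\<exists>\<alpha> \<beta>. X = block_toeplitz n d (\<lambda>j. \<alpha> j \<cdot>\<^sub>m 1\<^sub>m d + \<beta> j \<cdot>\<^sub>m M)"
  then obtain \<alpha> \<beta> where X: "X = block_toeplitz n d (\<lambda>j. \<alpha> j \<cdot>\<^sub>m 1\<^sub>m d + \<beta> j \<cdot>\<^sub>m M)" by blast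
  have "\<forall>j. \<bar>j\<bar> < int n \<longrightarrow> \<alpha> j \<cdot>\<^sub>m 1\<^sub>m d + \<beta> j \<cdot>\<^sub>m M \<in> carrier_mat d d
      \<and> \<alpha> j \<cdot>\<^sub>m 1\<^sub>m d + \<beta> j \<cdot>\<^sub>m M \<in> poly_algebra M"
    by (auto simp: mem_poly_algebra_iff)
  then show "X \<in> toeplitz_set n d (poly_algebra M)"
    unfolding toeplitz_set_def X by blast
qed

lemma block_toeplitz_coeffs_mult:
  assumes "\<forall>j. j \<noteq> 0 \<longrightarrow> \<alpha> j = 0" and "\<forall>j. j \<noteq> 0 \<longrightarrow> \<alpha>' j = 0"
  shows "block_toeplitz n d (\<lambda>j. \<alpha> j \<cdot>\<^sub>m 1\<^sub>m d + \<beta> j \<cdot>\<^sub>m M)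
           * block_toeplitz n d (\<lambda>j. \<alpha>' j \<cdot>\<^sub>m 1\<^sub>m d + \<beta>' j \<cdot>\<^sub>m M)
    = block_toeplitz n d (\<lambda>j. (if j = 0 then \<alpha> 0 * \<alpha>' 0 else 0) \<cdot>\<^sub>m 1\<^sub>m d
                               + (\<alpha> 0 * \<beta>' j + \<beta> j * \<alpha>' 0) \<cdot>\<^sub>m M)"
proof -
  have "block_toeplitz n d (\<lambda>j. \<alpha> j \<cdot>\<^sub>m 1\<^sub>m d + \<beta> j \<cdot>\<^sub>m M)
          * block_toeplitz n d (\<lambda>j. \<alpha>' j \<cdot>\<^sub>m 1\<^sub>m d + \<beta>' j \<cdot>\<^sub>m M)
    = block_toeplitz n d (\<lambda>j. if j = 0
        then (\<alpha> 0 \<cdot>\<^sub>m 1\<^sub>m d + \<beta> 0 \<cdot>\<^sub>m M) * (\<alpha>' 0 \<cdot>\<^sub>m 1\<^sub>m d + \<beta>' 0 \<cdot>\<^sub>m M)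
        else (\<alpha> 0 \<cdot>\<^sub>m 1\<^sub>m d + \<beta> 0 \<cdot>\<^sub>m M) * (\<alpha>' j \<cdot>\<^sub>m 1\<^sub>m d + \<beta>' j \<cdot>\<^sub>m M)
           + (\<alpha> j \<cdot>\<^sub>m 1\<^sub>m d + \<beta> j \<cdot>\<^sub>m M) * (\<alpha>' 0 \<cdot>\<^sub>m 1\<^sub>m d + \<beta>' 0 \<cdot>\<^sub>m M))"
    using assms by (intro block_toeplitz_mult_offdiag_annihilating)
      (auto simp: square_zero_mult square_zero_zero)
  also have "\<dots> = block_toeplitz n d (\<lambda>j. (if j = 0 then \<alpha> 0 * \<alpha>' 0 else 0) \<cdot>\<^sub>m 1\<^sub>m d
                               + (\<alpha> 0 * \<beta>' j + \<beta> j * \<alpha>' 0) \<cdot>\<^sub>m M)"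
    using assms by (intro block_toeplitz_cong) (auto simp: square_zero_mult square_zero_add)
  finally show ?thesis .
qed

end

locale nonzero_square_zero_mat = square_zero_mat M d for M :: "'a::field mat" and d +
  assumes M_nonzero: "M \<noteq> 0\<^sub>m d d"
begin

lemma smult_M_eq_zero_iff: "c \<cdot>\<^sub>m M = 0\<^sub>m d d \<longleftrightarrow> c = 0"
proof
  assume "c \<cdot>\<^sub>m M = 0\<^sub>m d d"
  obtain a b where "a < d" "b < d" "M $$ (a, b) \<noteq> 0"
    using M_nonzero M_carrier by (metis carrier_matD eq_matI index_zero_mat(1-3))
  with \<open>c \<cdot>\<^sub>m M = 0\<^sub>m d d\<close> show "c = 0"
    using M_carrier by (metis carrier_matD index_smult_mat(1) index_zero_mat(1) mult_eq_0_iff)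
qed (use M_carrier in \<open>auto intro!: eq_matI\<close>)

lemma invertible_square_zero_iff: "invertible_mat (a \<cdot>\<^sub>m 1\<^sub>m d + b \<cdot>\<^sub>m M) \<longleftrightarrow> a \<noteq> 0"
proof
  assume "invertible_mat (a \<cdot>\<^sub>m 1\<^sub>m d + b \<cdot>\<^sub>m M)"
  then obtain B where B: "B * (a \<cdot>\<^sub>m 1\<^sub>m d + b \<cdot>\<^sub>m M) = 1\<^sub>m d" "B \<in> carrier_mat d d"
    using M_carrier unfolding invertible_mat_def inverts_mat_def
    by (metis carrier_matI index_mult_mat(2,3) index_one_mat(3) square_zero_carrier carrier_matD)
  have "M = B * ((a \<cdot>\<^sub>m 1\<^sub>m d + b \<cdot>\<^sub>m M) * M)"
    using B M_carrier by (simp flip: assoc_mult_mat[OF B(2) square_zero_carrier M_carrier])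
  also have "(a \<cdot>\<^sub>m 1\<^sub>m d + b \<cdot>\<^sub>m M) * M = a \<cdot>\<^sub>m M"
    by (rule mult_square_zero_right)
  finally show "a \<noteq> 0"
    using M_nonzero smult_M_eq_zero_iff[of 0] right_mult_zero_mat[OF B(2)] by auto
next
  assume "a \<noteq> 0"
  let ?B = "(1 / a) \<cdot>\<^sub>m 1\<^sub>m d + (- b / (a * a)) \<cdot>\<^sub>m M"
  have coeffs: "a * (1 / a) = 1" "a * (- b / (a * a)) + b * (1 / a) = 0"
    "1 / a * a = 1" "1 / a * b + - b / (a * a) * a = 0"
    using \<open>a \<noteq> 0\<close> by (simp_all add: field_simps)
  have "1 \<cdot>\<^sub>m 1\<^sub>m d + 0 \<cdot>\<^sub>m M = 1\<^sub>m d"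
    using M_carrier by (auto intro!: eq_matI)
  then have "(a \<cdot>\<^sub>m 1\<^sub>m d + b \<cdot>\<^sub>m M) * ?B = 1\<^sub>m d" "?B * (a \<cdot>\<^sub>m 1\<^sub>m d + b \<cdot>\<^sub>m M) = 1\<^sub>m d"
    by (simp_all only: square_zero_mult coeffs)
  then show "invertible_mat (a \<cdot>\<^sub>m 1\<^sub>m d + b \<cdot>\<^sub>m M)"
    unfolding invertible_mat_def inverts_mat_def square_mat.simps
    by (intro conjI exI[of _ ?B]) (use M_carrier in auto)
qed

lemma dim_pos: "0 < d"
  using M_nonzero M_carrier by (cases d) auto

lemma mem_singular_offdiag_iff:
  "X \<in> toeplitz_set_singular_offdiag n d (poly_algebra M) \<longleftrightarrow>
     (\<exists>\<alpha> \<beta>. X = block_toeplitz n d (\<lambda>j. \<alpha> j \<cdot>\<^sub>m 1\<^sub>m d + \<beta> j \<cdot>\<^sub>m M) \<and> (\<forall>j. j \<noteq> 0 \<longrightarrow> \<alpha> j = 0))"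
proof
  assume "X \<in> toeplitz_set_singular_offdiag n d (poly_algebra M)"
  then obtain T where X: "X = block_toeplitz n d T"
    and T: "\<forall>j. \<bar>j\<bar> < int n \<longrightarrow> T j \<in> poly_algebra M"
    and sing: "\<forall>j. \<bar>j\<bar> < int n \<and> j \<noteq> 0 \<longrightarrow> \<not> invertible_mat (T j)"
    unfolding toeplitz_set_singular_offdiag_def by blast
  obtain \<alpha> \<beta> where \<alpha>\<beta>: "\<forall>j. \<bar>j\<bar> < int n \<longrightarrow> T j = \<alpha> j \<cdot>\<^sub>m 1\<^sub>m d + \<beta> j \<cdot>\<^sub>m M"
    using block_toeplitz_poly_algebra_coeffs[OF T] .
  have "\<alpha> j = 0" if "\<bar>j\<bar> < int n" "j \<noteq> 0" for j
    using sing \<alpha>\<beta> that invertible_square_zero_iff by metis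
  then have "X = block_toeplitz n d (\<lambda>j. (if j = 0 then \<alpha> 0 else 0) \<cdot>\<^sub>m 1\<^sub>m d + \<beta> j \<cdot>\<^sub>m M)"
    unfolding X using \<alpha>\<beta> by (intro block_toeplitz_cong) auto
  then show "\<exists>\<alpha> \<beta>. X = block_toeplitz n d (\<lambda>j. \<alpha> j \<cdot>\<^sub>m 1\<^sub>m d + \<beta> j \<cdot>\<^sub>m M) \<and> (\<forall>j. j \<noteq> 0 \<longrightarrow> \<alpha> j = 0)"
    by (intro exI[of _ "\<lambda>j. if j = 0 then \<alpha> 0 else 0"] exI[of _ \<beta>]) simp
next
  assume "\<exists>\<alpha> \<beta>. X = block_toeplitz n d (\<lambda>j. \<alpha> j \<cdot>\<^sub>m 1\<^sub>m d + \<beta> j \<cdot>\<^sub>m M) \<and> (\<forall>j. j \<noteq> 0 \<longrightarrow> \<alpha> j = 0)"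
  then obtain \<alpha> \<beta> where X: "X = block_toeplitz n d (\<lambda>j. \<alpha> j \<cdot>\<^sub>m 1\<^sub>m d + \<beta> j \<cdot>\<^sub>m M)"
    and \<alpha>: "\<forall>j. j \<noteq> 0 \<longrightarrow> \<alpha> j = 0" by blast
  have "\<forall>j. \<bar>j\<bar> < int n \<longrightarrow> \<alpha> j \<cdot>\<^sub>m 1\<^sub>m d + \<beta> j \<cdot>\<^sub>m M \<in> carrier_mat d d
      \<and> \<alpha> j \<cdot>\<^sub>m 1\<^sub>m d + \<beta> j \<cdot>\<^sub>m M \<in> poly_algebra M"
    by (auto simp: mem_poly_algebra_iff)
  moreover have "\<forall>j. \<bar>j\<bar> < int n \<and> j \<noteq> 0 \<longrightarrow> \<not> invertible_mat (\<alpha> j \<cdot>\<^sub>m 1\<^sub>m d + \<beta> j \<cdot>\<^sub>m M)"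
    using \<alpha> by (simp add: invertible_square_zero_iff)
  ultimately show "X \<in> toeplitz_set_singular_offdiag n d (poly_algebra M)"
    unfolding toeplitz_set_singular_offdiag_def X by blast
qed

lemma single_diag_mem_singular_offdiag:
  "block_toeplitz n d (\<lambda>i. if i = k then M else 0\<^sub>m d d) \<in> toeplitz_set_singular_offdiag n d (poly_algebra M)"
proof -
  have "block_toeplitz n d (\<lambda>i. 0 \<cdot>\<^sub>m 1\<^sub>m d + (if i = k then 1 else 0) \<cdot>\<^sub>m M)
      \<in> toeplitz_set_singular_offdiag n d (poly_algebra M)"
    unfolding mem_singular_offdiag_iff
    by (intro exI[of _ "\<lambda>_. 0"] exI[of _ "\<lambda>i. if i = k then 1 else 0"]) simp
  then show ?thesis by (simp only: square_zero_single)
qed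

lemma singular_offdiag_mult:
  assumes "X \<in> toeplitz_set_singular_offdiag n d (poly_algebra M)"
    and "Y \<in> toeplitz_set_singular_offdiag n d (poly_algebra M)"
  shows "X * Y \<in> toeplitz_set_singular_offdiag n d (poly_algebra M) \<and> X * Y = Y * X"
proof -
  obtain \<alpha> \<beta> where X: "X = block_toeplitz n d (\<lambda>j. \<alpha> j \<cdot>\<^sub>m 1\<^sub>m d + \<beta> j \<cdot>\<^sub>m M)"
    and \<alpha>: "\<forall>j. j \<noteq> 0 \<longrightarrow> \<alpha> j = 0"
    using assms(1) unfolding mem_singular_offdiag_iff by blast
  obtain \<alpha>' \<beta>' where Y: "Y = block_toeplitz n d (\<lambda>j. \<alpha>' j \<cdot>\<^sub>m 1\<^sub>m d + \<beta>' j \<cdot>\<^sub>m M)"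
    and \<alpha>': "\<forall>j. j \<noteq> 0 \<longrightarrow> \<alpha>' j = 0"
    using assms(2) unfolding mem_singular_offdiag_iff by blast
  have XY: "X * Y = block_toeplitz n d (\<lambda>j. (if j = 0 then \<alpha> 0 * \<alpha>' 0 else 0) \<cdot>\<^sub>m 1\<^sub>m d
                               + (\<alpha> 0 * \<beta>' j + \<beta> j * \<alpha>' 0) \<cdot>\<^sub>m M)"
    unfolding X Y using \<alpha> \<alpha>' by (rule block_toeplitz_coeffs_mult)
  moreover have "Y * X = block_toeplitz n d (\<lambda>j. (if j = 0 then \<alpha>' 0 * \<alpha> 0 else 0) \<cdot>\<^sub>m 1\<^sub>m d
                               + (\<alpha>' 0 * \<beta> j + \<beta>' j * \<alpha> 0) \<cdot>\<^sub>m M)"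
    unfolding X Y using \<alpha>' \<alpha> by (rule block_toeplitz_coeffs_mult)
  ultimately have "X * Y = Y * X" by (simp add: ac_simps cong: if_cong)
  moreover have "X * Y \<in> toeplitz_set_singular_offdiag n d (poly_algebra M)"
    unfolding XY mem_singular_offdiag_iff
    by (intro exI[of _ "\<lambda>j. if j = 0 then \<alpha> 0 * \<alpha>' 0 else 0"]
        exI[of _ "\<lambda>j. \<alpha> 0 * \<beta>' j + \<beta> j * \<alpha>' 0"]) simp
  ultimately show ?thesis by blast
qed

lemma comm_algebra_in_singular_offdiag:
  "comm_algebra_in (n * d) (toeplitz_set n d (poly_algebra M))
     (toeplitz_set_singular_offdiag n d (poly_algebra M))"
  (is "comm_algebra_in _ ?T ?A")
proof -
  have "?A \<subseteq> ?T"
  proof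
    fix X assume "X \<in> ?A"
    then obtain \<alpha> \<beta> where "X = block_toeplitz n d (\<lambda>j. \<alpha> j \<cdot>\<^sub>m 1\<^sub>m d + \<beta> j \<cdot>\<^sub>m M)"
      unfolding mem_singular_offdiag_iff by blast
    then show "X \<in> ?T" unfolding mem_toeplitz_set_iff by blast
  qed
  moreover have "0\<^sub>m (n * d) (n * d) \<in> ?A"
    unfolding mem_singular_offdiag_iff
    by (intro exI[of _ "\<lambda>_. 0"] exI[of _ "\<lambda>_. 0"]) (simp add: square_zero_zero block_toeplitz_zero)
  moreover have "X + Y \<in> ?A \<and> c \<cdot>\<^sub>m X \<in> ?A" if XA: "X \<in> ?A" and YA: "Y \<in> ?A" for X Y c
  proof -
    obtain \<alpha> \<beta> where X: "X = block_toeplitz n d (\<lambda>j. \<alpha> j \<cdot>\<^sub>m 1\<^sub>m d + \<beta> j \<cdot>\<^sub>m M)"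
      and \<alpha>: "\<forall>j. j \<noteq> 0 \<longrightarrow> \<alpha> j = 0"
      using XA unfolding mem_singular_offdiag_iff by blast
    obtain \<alpha>' \<beta>' where Y: "Y = block_toeplitz n d (\<lambda>j. \<alpha>' j \<cdot>\<^sub>m 1\<^sub>m d + \<beta>' j \<cdot>\<^sub>m M)"
      and \<alpha>': "\<forall>j. j \<noteq> 0 \<longrightarrow> \<alpha>' j = 0"
      using YA unfolding mem_singular_offdiag_iff by blast
    have "X + Y = block_toeplitz n d (\<lambda>j. (\<alpha> j + \<alpha>' j) \<cdot>\<^sub>m 1\<^sub>m d + (\<beta> j + \<beta>' j) \<cdot>\<^sub>m M)"
      unfolding X Y by (simp add: block_toeplitz_add square_zero_add)
    moreover have "c \<cdot>\<^sub>m X = block_toeplitz n d (\<lambda>j. (c * \<alpha> j) \<cdot>\<^sub>m 1\<^sub>m d + (c * \<beta> j) \<cdot>\<^sub>m M)"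
      unfolding X by (simp add: block_toeplitz_smult square_zero_smult)
    ultimately show ?thesis
      unfolding mem_singular_offdiag_iff using \<alpha> \<alpha>'
      by (intro conjI exI[of _ "\<lambda>j. \<alpha> j + \<alpha>' j"] exI[of _ "\<lambda>j. \<beta> j + \<beta>' j"]
          exI[of _ "\<lambda>j. c * \<alpha> j"] exI[of _ "\<lambda>j. c * \<beta> j"]) simp_all
  qed
  ultimately show ?thesis
    unfolding comm_algebra_in_def algebra_in_def using singular_offdiag_mult by (intro conjI ballI allI) auto
qed

lemma singular_offdiag_maximal:
  assumes C: "comm_algebra_in (n * d) (toeplitz_set n d (poly_algebra M)) C"
    and sub: "toeplitz_set_singular_offdiag n d (poly_algebra M) \<subseteq> C"
  shows "C = toeplitz_set_singular_offdiag n d (poly_algebra M)"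
proof
  show "C \<subseteq> toeplitz_set_singular_offdiag n d (poly_algebra M)"
  proof
    fix X assume "X \<in> C"
    with C have "X \<in> toeplitz_set n d (poly_algebra M)"
      unfolding comm_algebra_in_def algebra_in_def by blast
    then obtain \<alpha> \<beta> where X: "X = block_toeplitz n d (\<lambda>j. \<alpha> j \<cdot>\<^sub>m 1\<^sub>m d + \<beta> j \<cdot>\<^sub>m M)"
      unfolding mem_toeplitz_set_iff by blast
    have "\<alpha> j = 0" if j: "j \<noteq> 0" "\<bar>j\<bar> < int n" for j
    proof -
      let ?E = "block_toeplitz n d (\<lambda>i. if i = - j then M else 0\<^sub>m d d)"
      have "?E \<in> C" using sub single_diag_mem_singular_offdiag by blast
      with \<open>X \<in> C\<close> C have "X * ?E = ?E * X" unfolding comm_algebra_in_def by blast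
      then have "M * (\<alpha> j \<cdot>\<^sub>m 1\<^sub>m d + \<beta> j \<cdot>\<^sub>m M) = 0\<^sub>m d d"
        unfolding X
        by (rule block_toeplitz_commute_single_diag[where T = "\<lambda>i. \<alpha> i \<cdot>\<^sub>m 1\<^sub>m d + \<beta> i \<cdot>\<^sub>m M",
              OF square_zero_carrier M_carrier j])
      then show "\<alpha> j = 0" by (simp add: mult_square_zero_left smult_M_eq_zero_iff)
    qed
    then have "X = block_toeplitz n d (\<lambda>j. (if j = 0 then \<alpha> 0 else 0) \<cdot>\<^sub>m 1\<^sub>m d + \<beta> j \<cdot>\<^sub>m M)"
      unfolding X by (intro block_toeplitz_cong) auto
    then show "X \<in> toeplitz_set_singular_offdiag n d (poly_algebra M)"
      unfolding mem_singular_offdiag_iff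
      by (intro exI[of _ "\<lambda>j. if j = 0 then \<alpha> 0 else 0"] exI[of _ \<beta>]) simp
  qed
qed (rule sub)

lemma singular_offdiag_subset_F_set_imp:
  assumes n: "2 \<le> n"
    and A: "A = a \<cdot>\<^sub>m 1\<^sub>m d + b \<cdot>\<^sub>m M" and B: "B = a' \<cdot>\<^sub>m 1\<^sub>m d + b' \<cdot>\<^sub>m M"
    and sub: "toeplitz_set_singular_offdiag n d (poly_algebra M) \<subseteq> F_set n d (poly_algebra M) A B"
  shows "a = 0 \<and> a' = 0"
proof -
  have rel: "A * (if 1 = k then M else 0\<^sub>m d d) = B * (if 1 - int n = k then M else 0\<^sub>m d d)" for k
  proof -
    have "block_toeplitz n d (\<lambda>i. if i = k then M else 0\<^sub>m d d) \<in> F_set n d (poly_algebra M) A B"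
      using sub single_diag_mem_singular_offdiag by blast
    then show ?thesis
      using n M_carrier by (subst (asm) block_toeplitz_mem_F_set_iff[OF dim_pos]) auto
  qed
  have "A * M = 0\<^sub>m d d" "B * M = 0\<^sub>m d d"
    using rel[of 1] rel[of "1 - int n"] n unfolding A B
    by (auto simp: right_mult_zero_mat[OF square_zero_carrier])
  then show ?thesis
    unfolding A B by (simp add: mult_square_zero_right smult_M_eq_zero_iff)
qed

lemma F_set_not_subset_singular_offdiag:
  assumes n: "2 \<le> n" and bc: "b * c = b' * e" and ce: "c \<noteq> 0 \<or> e \<noteq> 0"
  shows "\<not> F_set n d (poly_algebra M) (0 \<cdot>\<^sub>m 1\<^sub>m d + b \<cdot>\<^sub>m M) (0 \<cdot>\<^sub>m 1\<^sub>m d + b' \<cdot>\<^sub>m M)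
           \<subseteq> toeplitz_set_singular_offdiag n d (poly_algebra M)"
proof
  define \<gamma> where "\<gamma> j = (if j = 1 then c else if j = 1 - int n then e else 0)" for j :: int
  let ?W = "block_toeplitz n d (\<lambda>j. \<gamma> j \<cdot>\<^sub>m 1\<^sub>m d + 0 \<cdot>\<^sub>m M)"
  assume sub: "F_set n d (poly_algebra M) (0 \<cdot>\<^sub>m 1\<^sub>m d + b \<cdot>\<^sub>m M) (0 \<cdot>\<^sub>m 1\<^sub>m d + b' \<cdot>\<^sub>m M)
           \<subseteq> toeplitz_set_singular_offdiag n d (poly_algebra M)"
  have "\<gamma> j = (if j = 1 then c else 0)" "\<gamma> (j - int n) = (if j = 1 then e else 0)"
    if "1 \<le> j" "j \<le> int n - 1" for j
    using that by (auto simp: \<gamma>_def)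
  then have "?W \<in> F_set n d (poly_algebra M) (0 \<cdot>\<^sub>m 1\<^sub>m d + b \<cdot>\<^sub>m M) (0 \<cdot>\<^sub>m 1\<^sub>m d + b' \<cdot>\<^sub>m M)"
    using bc by (subst block_toeplitz_mem_F_set_iff[OF dim_pos])
      (auto simp: mem_poly_algebra_iff square_zero_mult mult.commute)
  with sub have "?W \<in> toeplitz_set_singular_offdiag n d (poly_algebra M)" by blast
  then have "\<forall>j. \<bar>j\<bar> < int n \<and> j \<noteq> 0 \<longrightarrow> \<gamma> j = 0"
    by (subst (asm) block_toeplitz_mem_singular_offdiag_iff[OF dim_pos])
      (auto simp: invertible_square_zero_iff)
  moreover have "\<bar>1::int\<bar> < int n" "\<bar>1 - int n\<bar> < int n" "1 - int n \<noteq> 0" using n by auto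
  ultimately have "\<gamma> 1 = 0" "\<gamma> (1 - int n) = 0" by auto
  with ce n show False by (simp add: \<gamma>_def)
qed

lemma singular_offdiag_ne_F_set:
  assumes n: "2 \<le> n" and "A \<in> poly_algebra M" "B \<in> poly_algebra M"
  shows "toeplitz_set_singular_offdiag n d (poly_algebra M) \<noteq> F_set n d (poly_algebra M) A B"
proof
  assume eq: "toeplitz_set_singular_offdiag n d (poly_algebra M) = F_set n d (poly_algebra M) A B"
  obtain a b where A: "A = a \<cdot>\<^sub>m 1\<^sub>m d + b \<cdot>\<^sub>m M"
    using assms(2) unfolding mem_poly_algebra_iff by blast
  obtain a' b' where B: "B = a' \<cdot>\<^sub>m 1\<^sub>m d + b' \<cdot>\<^sub>m M"
    using assms(3) unfolding mem_poly_algebra_iff by blast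
  have "a = 0 \<and> a' = 0"
    using n A B eq by (intro singular_offdiag_subset_F_set_imp) auto
  obtain c e where "b * c = b' * e" "c \<noteq> 0 \<or> e \<noteq> 0"
    by (metis mult.commute one_neq_zero)
  from F_set_not_subset_singular_offdiag[OF n this] show False
    using eq \<open>a = 0 \<and> a' = 0\<close> unfolding A B by simp
qed

end

theorem theorem7p3:
  fixes n d :: nat and M :: "complex mat"
  assumes "n \<ge> 2"
    and "M \<in> carrier_mat d d"
    and "nonderogatory M"
    and "M \<noteq> 0\<^sub>m d d"
    and "M * M = 0\<^sub>m d d"
  defines "\<A> \<equiv> {block_toeplitz n d T | T.
             (\<forall>j::int. \<bar>j\<bar> < int n \<longrightarrow> T j \<in> carrier_mat d d \<and> T j \<in> poly_algebra M) \<and>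
             (\<forall>j::int. \<bar>j\<bar> < int n \<and> j \<noteq> 0 \<longrightarrow> \<not> invertible_mat (T j))}"
  shows "comm_algebra_in (n * d) (toeplitz_set n d (poly_algebra M)) \<A>
    \<and> (\<forall>C. comm_algebra_in (n * d) (toeplitz_set n d (poly_algebra M)) C \<and> \<A> \<subseteq> C \<longrightarrow> C = \<A>)
    \<and> \<not> (\<exists>A B. A \<in> poly_algebra M \<and> B \<in> poly_algebra M \<and> \<A> = F_set n d (poly_algebra M) A B)"
proof -
  interpret nonzero_square_zero_mat M d
    using assms(2,4,5) by unfold_locales auto
  have "\<A> = toeplitz_set_singular_offdiag n d (poly_algebra M)"
    unfolding \<A>_def toeplitz_set_singular_offdiag_def ..
  with comm_algebra_in_singular_offdiag singular_offdiag_maximal singular_offdiag_ne_F_set[OF assms(1)]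
  show ?thesis by metis
qed

end
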